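(* Consider the Lion (v1) algorithm (defined in the context) under Assumptions (A1) and (A3), with parameters $\beta_1,\beta_2\in(0,1]$ satisfying $\beta_2^2\le\beta_1\le\sqrt{\beta_2}$, $\eta>0$, $0\le\lambda\le\frac1{2\eta T}$ and $\|\mathbf{x}_1\|_\infty\le\eta$. Then $$\mathbb{E}\left[\frac1T\sum_{t=1}^T\|\mathbf{v}_t-\nabla f(\mathbf{x}_t)\|^2\right]\le \frac{2\sigma^2}{\beta_2T}+\frac{16\eta^2L^2d}{\beta_2^2}+2\beta_2\sigma^2 .$$
   Context: Setting: $f:\mathbb{R}^d\to\mathbb{R}$ is accessed through a stochastic gradient oracle: at each query a fresh sample $\xi$ is drawn from a fixed distribution, independently of everything before, and $\nabla f(\mathbf{x};\xi)$ is returned. $\|\cdot\|$ is the Euclidean norm; $\operatorname{sign}$ acts coordinatewise with values in $\{-1,0,1\}$. (A1) $\|\nabla f(\mathbf{x})-\nabla f(\mathbf{y})\|\le L\|\mathbf{x}-\mathbf{y}\|$ for all $\mathbf{x},\mathbf{y}$. (A3) $\mathbb{E}_\xi[\nabla f(\mathbf{x};\xi)]=\nabla f(\mathbf{x})$ and $\mathbb{E}_\xi\|\nabla f(\mathbf{x};\xi)-\nabla f(\mathbf{x})\|^2\le\sigma^2$ for all $\mathbf{x}$. Lion (v1): given $\mathbf{x}_1\in\mathbb{R}^d$, $\beta_1,\beta_2\in(0,1]$, $\eta>0$, $\lambda\ge0$, horizon $T$. At $t=1$ draw $\xi_1$ and set $\mathbf{v}_1=\mathbf{m}_1=\nabla f(\mathbf{x}_1;\xi_1)$.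 For $t\ge2$ draw a fresh $\xi_t$ and set $\mathbf{v}_t=(1-\beta_1)\mathbf{m}_{t-1}+\beta_1\nabla f(\mathbf{x}_t;\xi_t)$, $\mathbf{m}_t=(1-\beta_2)\mathbf{m}_{t-1}+\beta_2\nabla f(\mathbf{x}_t;\xi_t)$. For all $t\ge1$: $\mathbf{x}_{t+1}=\mathbf{x}_t-\eta(\operatorname{sign}(\mathbf{v}_t)+\lambda\mathbf{x}_t)$. *)

theory Defs
  imports "HOL-Probability.Probability"
begin

definition sign_vec :: "real^'d \<Rightarrow> real^'d" where
  "sign_vec v = (\<chi> i. sgn (v $ i))"

text \<open>The sample sequence is \<open>\<omega> :: nat \<Rightarrow> 'b\<close>, with \<open>\<omega> t\<close> the
  sample xi_t drawn at iteration t (t \<ge> 1; \<open>\<omega> 0\<close> is unused).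
  \<open>lion_st g beta1 beta2 eta lam x1 \<omega> n\<close> is the triple (x_t, m_t, v_t) for t = n+1.\<close>
primrec lion_st ::
  "(real^'d \<Rightarrow> 'b \<Rightarrow> real^'d) \<Rightarrow> real \<Rightarrow> real \<Rightarrow> real \<Rightarrow> real \<Rightarrow> real^'d
   \<Rightarrow> (nat \<Rightarrow> 'b) \<Rightarrow> nat \<Rightarrow> (real^'d) \<times> (real^'d) \<times> (real^'d)" where
  "lion_st g beta1 beta2 eta lam x1 \<omega> 0 = (x1, g x1 (\<omega> 1), g x1 (\<omega> 1))"
| "lion_st g beta1 beta2 eta lam x1 \<omega> (Suc n) =
     (let (x, m, v) = lion_st g beta1 beta2 eta lam x1 \<omega> n;
          x' = x - eta *\<^sub>R (sign_vec v + lam *\<^sub>R x);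
          gr = g x' (\<omega> (n + 2))
      in (x', (1 - beta2) *\<^sub>R m + beta2 *\<^sub>R gr, (1 - beta1) *\<^sub>R m + beta1 *\<^sub>R gr))"

definition lion_x where
  "lion_x g beta1 beta2 eta lam x1 \<omega> t = fst (lion_st g beta1 beta2 eta lam x1 \<omega> (t - 1))"
definition lion_v where
  "lion_v g beta1 beta2 eta lam x1 \<omega> t = snd (snd (lion_st g beta1 beta2 eta lam x1 \<omega> (t - 1)))"

end

(* The momentum error e_t = m_t - grad f(x_t) obeys
     e_(t+1) = (1 - beta2) (e_t + grad f(x_t) - grad f(x_(t+1))) + beta2 xi_(t+1),
   where the noise xi_(t+1) of the fresh sample has mean zero given the past, so it only adds
   beta2^2 sigma^2 to the second moment. Sign updates move every coordinate by at most 2 eta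
   (weight decay with lam <= 1/(2 eta T) keeps the iterates in the box of radius t eta), so by
   (A1) the gradient drift is at most delta = 4 eta^2 L^2 d, and Young's inequality with weight
   beta2 gives E|e_(t+1)|^2 <= (1 - beta2) E|e_t|^2 + delta/beta2 + beta2^2 sigma^2. Unrolled,
   E|e_t|^2 <= (1 - beta2)^t sigma^2 + delta/beta2^2 + beta2 sigma^2. The vector v_t is one more
   such update with weight beta1, and beta2^2 <= beta1, beta1^2 <= beta2 put its error in the
   same form; averaging the geometric series over t gives the bound. *)

theory Submission
  imports Defs
begin

lemma norm_add_sq_le_weighted:
  fixes u v :: "'a::real_inner"
  assumes "0 < c"
  shows "(norm (u + v))\<^sup>2 \<le> (1 + c) * (norm u)\<^sup>2 + (1 + 1 / c) * (norm v)\<^sup>2"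
proof -
  have "0 \<le> (norm (c *\<^sub>R u - v))\<^sup>2" by simp
  also have "\<dots> = c\<^sup>2 * (norm u)\<^sup>2 - 2 * c * (u \<bullet> v) + (norm v)\<^sup>2"
    unfolding power2_norm_eq_inner
    by (simp add: inner_diff_left inner_diff_right inner_commute power2_eq_square algebra_simps)
  finally have "2 * (u \<bullet> v) \<le> c * (norm u)\<^sup>2 + (norm v)\<^sup>2 / c"
    using assms by (simp add: field_simps power2_eq_square)
  then show ?thesis
    by (simp add: power2_norm_eq_inner inner_add_left inner_add_right inner_commute algebra_simps)
qed

lemma norm_scaleR_one_minus_add_sq_le:
  fixes u v :: "'a::real_inner"
  assumes b: "0 < b" "b \<le> 1"
  shows "(norm ((1 - b) *\<^sub>R (u + v)))\<^sup>2 \<le> (1 - b) * (norm u)\<^sup>2 + (norm v)\<^sup>2 / b"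
proof -
  have shrink: "(1 - b)\<^sup>2 * (1 + b) \<le> 1 - b"
  proof -
    have "(1 - b)\<^sup>2 * (1 + b) = (1 - b) * (1 - b\<^sup>2)" by (simp add: power2_eq_square algebra_simps)
    also have "\<dots> \<le> 1 - b" using b by (simp add: mult_left_le)
    finally show ?thesis .
  qed
  have "(norm ((1 - b) *\<^sub>R (u + v)))\<^sup>2 = (1 - b)\<^sup>2 * (norm (u + v))\<^sup>2"
    by (simp add: power_mult_distrib)
  also have "\<dots> \<le> (1 - b)\<^sup>2 * ((1 + b) * (norm u)\<^sup>2 + (1 + 1 / b) * (norm v)\<^sup>2)"
    using b by (intro mult_left_mono norm_add_sq_le_weighted) auto
  also have "\<dots> = (1 - b)\<^sup>2 * (1 + b) * (norm u)\<^sup>2 + (1 - b)\<^sup>2 * (1 + b) * ((norm v)\<^sup>2 / b)"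
    using b by (simp add: field_simps)
  also have "\<dots> \<le> (1 - b) * (norm u)\<^sup>2 + 1 * ((norm v)\<^sup>2 / b)"
    using shrink b by (intro add_mono mult_right_mono) auto
  finally show ?thesis by simp
qed

lemma (in prob_space) nn_integral_norm_add_zero_mean_le:
  fixes h :: "'a \<Rightarrow> 'b::euclidean_space"
  assumes h: "integrable M h" "expectation h = 0"
    and h2: "(\<integral>\<^sup>+\<xi>. ennreal ((norm (h \<xi>))\<^sup>2) \<partial>M) \<le> ennreal (\<sigma>\<^sup>2)"
  shows "(\<integral>\<^sup>+\<xi>. ennreal ((norm (y + b *\<^sub>R h \<xi>))\<^sup>2) \<partial>M) \<le> ennreal ((norm y)\<^sup>2 + b\<^sup>2 * \<sigma>\<^sup>2)"
proof -
  have h2_int: "integrable M (\<lambda>\<xi>. (norm (h \<xi>))\<^sup>2)"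
  proof (rule integrableI_bounded)
    show "(\<lambda>\<xi>. (norm (h \<xi>))\<^sup>2) \<in> borel_measurable M" using h by measurable
    show "(\<integral>\<^sup>+\<xi>. ennreal (norm ((norm (h \<xi>))\<^sup>2)) \<partial>M) < \<infinity>"
      using h2 by (simp add: le_less_trans)
  qed
  have "ennreal (expectation (\<lambda>\<xi>. (norm (h \<xi>))\<^sup>2)) \<le> ennreal (\<sigma>\<^sup>2)"
    using h2 by (subst nn_integral_eq_integral[symmetric, OF h2_int]) auto
  then have h2_le: "expectation (\<lambda>\<xi>. (norm (h \<xi>))\<^sup>2) \<le> \<sigma>\<^sup>2"
    by (simp add: ennreal_le_iff)
  have expand: "(norm (y + b *\<^sub>R h \<xi>))\<^sup>2 = (norm y)\<^sup>2 + 2 * b * (y \<bullet> h \<xi>) + b\<^sup>2 * (norm (h \<xi>))\<^sup>2" for \<xi>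
    unfolding power2_norm_eq_inner
    by (simp add: inner_add_left inner_add_right inner_commute power2_eq_square algebra_simps)
  have "(\<integral>\<^sup>+\<xi>. ennreal ((norm (y + b *\<^sub>R h \<xi>))\<^sup>2) \<partial>M)
      = (\<integral>\<^sup>+\<xi>. ennreal ((norm y)\<^sup>2 + 2 * b * (y \<bullet> h \<xi>) + b\<^sup>2 * (norm (h \<xi>))\<^sup>2) \<partial>M)"
    by (simp only: expand)
  also have "\<dots> = ennreal (expectation (\<lambda>\<xi>. (norm y)\<^sup>2 + 2 * b * (y \<bullet> h \<xi>) + b\<^sup>2 * (norm (h \<xi>))\<^sup>2))"
  proof (rule nn_integral_eq_integral)
    show "integrable M (\<lambda>\<xi>. (norm y)\<^sup>2 + 2 * b * (y \<bullet> h \<xi>) + b\<^sup>2 * (norm (h \<xi>))\<^sup>2)"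
      using h h2_int by auto
  qed (simp flip: expand)
  also have "\<dots> = ennreal ((norm y)\<^sup>2 + b\<^sup>2 * expectation (\<lambda>\<xi>. (norm (h \<xi>))\<^sup>2))"
    using h h2_int by (simp add: prob_space)
  also have "\<dots> \<le> ennreal ((norm y)\<^sup>2 + b\<^sup>2 * \<sigma>\<^sup>2)"
    using h2_le by (intro ennreal_leI add_left_mono mult_left_mono) auto
  finally show ?thesis .
qed

lemma (in product_prob_space) nn_integral_PiM_resample:
  assumes t: "t \<in> I" and H: "H \<in> borel_measurable (PiM I M)"
  shows "(\<integral>\<^sup>+w. H w \<partial>PiM I M) = (\<integral>\<^sup>+w. \<integral>\<^sup>+z. H (w(t := z)) \<partial>M t \<partial>PiM I M)"
proof -
  interpret pair_sigma_finite "M t" "PiM I M" by unfold_locales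
  let ?upd = "\<lambda>(z, w). w(t := z)"
  have upd: "?upd \<in> M t \<Otimes>\<^sub>M PiM I M \<rightarrow>\<^sub>M PiM I M"
    using measurable_fun_upd[where I=I and J=I and i=t and M=M and N="M t \<Otimes>\<^sub>M PiM I M"
        and f=snd and h=fst] t by (simp add: case_prod_beta' insert_absorb)
  have "distr (M t \<Otimes>\<^sub>M PiM I M) (PiM I M) ?upd = PiM I M"
    using distr_pair_PiM_eq_PiM[of I M t] t prob_space by (simp add: insert_absorb)
  then have "(\<integral>\<^sup>+w. H w \<partial>PiM I M) = (\<integral>\<^sup>+p. H (?upd p) \<partial>(M t \<Otimes>\<^sub>M PiM I M))"
    using nn_integral_distr[OF upd, of H] H by simp
  also have "\<dots> = (\<integral>\<^sup>+w. \<integral>\<^sup>+z. H (w(t := z)) \<partial>M t \<partial>PiM I M)"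
    using nn_integral_snd[of "\<lambda>p. H (?upd p)"] measurable_comp[OF upd H]
    by (simp add: comp_def case_prod_beta')
  finally show ?thesis .
qed

locale stochastic_gradient_oracle =
  fixes D :: "'b measure" and g :: "'a::euclidean_space \<Rightarrow> 'b \<Rightarrow> 'a"
    and f' :: "'a \<Rightarrow> 'a" and \<sigma> :: real
  assumes prob_space_D: "prob_space D"
    and g_measurable: "(\<lambda>(x, \<xi>). g x \<xi>) \<in> borel_measurable (borel \<Otimes>\<^sub>M D)"
    and g_integrable: "\<And>x. integrable D (g x)"
    and g_unbiased: "\<And>x. (\<integral>\<xi>. g x \<xi> \<partial>D) = f' x"
    and g_variance: "\<And>x. (\<integral>\<^sup>+\<xi>. ennreal ((norm (g x \<xi> - f' x))\<^sup>2) \<partial>D) \<le> ennreal (\<sigma>\<^sup>2)"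
begin

lemma measurable_g_sample:
  assumes "X \<in> borel_measurable N" and "Z \<in> N \<rightarrow>\<^sub>M D"
  shows "(\<lambda>w. g (X w) (Z w)) \<in> borel_measurable N"
  using measurable_compose[OF measurable_Pair[OF assms] g_measurable] by simp

lemma borel_measurable_f' [measurable]: "f' \<in> borel_measurable borel"
proof -
  interpret prob_space D by (rule prob_space_D)
  have "(\<lambda>x. \<integral>\<xi>. g x \<xi> \<partial>D) \<in> borel_measurable borel"
    using g_measurable by (rule borel_measurable_lebesgue_integral)
  then show ?thesis by (simp add: g_unbiased)
qed

lemma noise_second_moment_le:
  "(\<integral>\<^sup>+\<xi>. ennreal ((norm (y + b *\<^sub>R (g x \<xi> - f' x)))\<^sup>2) \<partial>D) \<le> ennreal ((norm y)\<^sup>2 + b\<^sup>2 * \<sigma>\<^sup>2)"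
proof -
  interpret prob_space D by (rule prob_space_D)
  show ?thesis
  proof (rule nn_integral_norm_add_zero_mean_le)
    show "integrable D (\<lambda>\<xi>. g x \<xi> - f' x)" using g_integrable by simp
    show "expectation (\<lambda>\<xi>. g x \<xi> - f' x) = 0"
      using g_integrable g_unbiased by (simp add: prob_space)
  qed (rule g_variance)
qed

lemma nn_integral_fresh_noise_le:
  fixes I :: "'i set" and Y X :: "('i \<Rightarrow> 'b) \<Rightarrow> 'a"
  defines "P \<equiv> PiM I (\<lambda>_. D)"
  assumes t: "t \<in> I" and Y: "Y \<in> borel_measurable P" and X: "X \<in> borel_measurable P"
    and Y_indep: "\<And>w z. Y (w(t := z)) = Y w" and X_indep: "\<And>w z. X (w(t := z)) = X w"
  shows "(\<integral>\<^sup>+w. ennreal ((norm (Y w + b *\<^sub>R (g (X w) (w t) - f' (X w))))\<^sup>2) \<partial>P)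
     \<le> (\<integral>\<^sup>+w. ennreal ((norm (Y w))\<^sup>2) \<partial>P) + ennreal (b\<^sup>2 * \<sigma>\<^sup>2)"
proof -
  interpret prob_space D by (rule prob_space_D)
  interpret product_prob_space "\<lambda>_. D" I by unfold_locales
  have [measurable]: "(\<lambda>w. g (X w) (w t)) \<in> borel_measurable P"
    using t X unfolding P_def by (intro measurable_g_sample measurable_component_singleton)
  note [measurable] = X Y
  have "(\<integral>\<^sup>+w. ennreal ((norm (Y w + b *\<^sub>R (g (X w) (w t) - f' (X w))))\<^sup>2) \<partial>P)
      = (\<integral>\<^sup>+w. \<integral>\<^sup>+z. ennreal ((norm (Y w + b *\<^sub>R (g (X w) z - f' (X w))))\<^sup>2) \<partial>D \<partial>P)"
    unfolding P_def by (subst nn_integral_PiM_resample[OF t]) (simp_all add: Y_indep X_indep flip: P_def)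
  also have "\<dots> \<le> (\<integral>\<^sup>+w. ennreal ((norm (Y w))\<^sup>2 + b\<^sup>2 * \<sigma>\<^sup>2) \<partial>P)"
    by (intro nn_integral_mono noise_second_moment_le)
  also have "\<dots> = (\<integral>\<^sup>+w. ennreal ((norm (Y w))\<^sup>2) \<partial>P) + ennreal (b\<^sup>2 * \<sigma>\<^sup>2)"
    using Y unfolding P_def by (simp add: ennreal_plus nn_integral_add P.emeasure_space_1)
  finally show ?thesis .
qed

end

lemma borel_measurable_sign_vec [measurable]: "sign_vec \<in> borel_measurable borel"
proof (subst borel_measurable_euclidean_space, intro ballI)
  fix b :: "real^'d" assume "b \<in> Basis"
  then obtain i where b: "b = axis i 1" by (auto simp: Basis_vec_def)
  have "(\<lambda>x::real^'d. x $ i) \<in> borel_measurable borel"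
    by (intro borel_measurable_continuous_onI continuous_intros)
  then show "(\<lambda>x. sign_vec x \<bullet> b) \<in> borel_measurable borel"
    unfolding b sign_vec_def inner_axis by simp
qed

lemma norm_sq_le_card_if_components_le:
  fixes x :: "real^'n"
  assumes "\<And>i. \<bar>x $ i\<bar> \<le> c"
  shows "(norm x)\<^sup>2 \<le> real CARD('n) * c\<^sup>2"
proof -
  have "(norm x)\<^sup>2 = (\<Sum>i\<in>UNIV. (x $ i)\<^sup>2)"
    unfolding power2_norm_eq_inner by (simp add: inner_vec_def power2_eq_square)
  also have "\<dots> \<le> (\<Sum>i\<in>(UNIV :: 'n set). c\<^sup>2)"
    using assms by (intro sum_mono) (metis abs_le_square_iff abs_of_nonneg abs_ge_zero order_trans)
  finally show ?thesis by simp
qed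

lemma lion_st_cong:
  assumes "\<And>i. i \<le> Suc n \<Longrightarrow> w i = w' i"
  shows "lion_st g beta1 beta2 eta lam x1 w n = lion_st g beta1 beta2 eta lam x1 w' n"
  using assms by (induction n) (simp_all add: Let_def split: prod.split)

locale lion = stochastic_gradient_oracle D g f' \<sigma>
  for D :: "'b measure" and g :: "real^'d \<Rightarrow> 'b \<Rightarrow> real^'d" and f' \<sigma> +
  fixes L beta1 beta2 eta lam :: real and x1 :: "real^'d" and T :: nat
  assumes f'_lipschitz: "\<And>x y. norm (f' x - f' y) \<le> L * norm (x - y)"
    and beta1: "0 < beta1" "beta1 \<le> 1" and beta2: "0 < beta2" "beta2 \<le> 1"
    and beta12: "beta2\<^sup>2 \<le> beta1" "beta1\<^sup>2 \<le> beta2"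
    and eta: "0 < eta" and T: "1 \<le> T"
    and lam: "0 \<le> lam" "lam \<le> 1 / (2 * eta * real T)"
    and x1: "\<And>i. \<bar>x1 $ i\<bar> \<le> eta"
begin

text \<open>Indices start at 0: \<open>xs n\<close> is the iterate x_{n+1}, which depends only on the samples
  \<open>w 1, \<dots>, w (n + 1)\<close>.\<close>

definition xs :: "nat \<Rightarrow> (nat \<Rightarrow> 'b) \<Rightarrow> real^'d" where
  "xs n w = fst (lion_st g beta1 beta2 eta lam x1 w n)"

definition ms :: "nat \<Rightarrow> (nat \<Rightarrow> 'b) \<Rightarrow> real^'d" where
  "ms n w = fst (snd (lion_st g beta1 beta2 eta lam x1 w n))"

definition vs :: "nat \<Rightarrow> (nat \<Rightarrow> 'b) \<Rightarrow> real^'d" where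
  "vs n w = snd (snd (lion_st g beta1 beta2 eta lam x1 w n))"

lemma iterates_0: "xs 0 w = x1" "ms 0 w = g x1 (w 1)" "vs 0 w = g x1 (w 1)"
  by (simp_all add: xs_def ms_def vs_def)

lemma iterates_Suc:
  "xs (Suc n) w = xs n w - eta *\<^sub>R (sign_vec (vs n w) + lam *\<^sub>R xs n w)"
  "ms (Suc n) w = (1 - beta2) *\<^sub>R ms n w + beta2 *\<^sub>R g (xs (Suc n) w) (w (n + 2))"
  "vs (Suc n) w = (1 - beta1) *\<^sub>R ms n w + beta1 *\<^sub>R g (xs (Suc n) w) (w (n + 2))"
  by (simp_all add: xs_def ms_def vs_def Let_def split: prod.split)

lemma iterates_fun_upd:
  assumes "Suc n < k"
  shows "xs n (w(k := z)) = xs n w" "ms n (w(k := z)) = ms n w" "vs n (w(k := z)) = vs n w"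
proof -
  have "lion_st g beta1 beta2 eta lam x1 (w(k := z)) n = lion_st g beta1 beta2 eta lam x1 w n"
    using assms by (intro lion_st_cong) auto
  then show "xs n (w(k := z)) = xs n w" "ms n (w(k := z)) = ms n w" "vs n (w(k := z)) = vs n w"
    by (simp_all add: xs_def ms_def vs_def)
qed

lemma xs_Suc_fun_upd: "xs (Suc n) (w(Suc (Suc n) := z)) = xs (Suc n) w"
  by (simp add: iterates_Suc iterates_fun_upd)

abbreviation sample_space :: "(nat \<Rightarrow> 'b) measure" where
  "sample_space \<equiv> PiM UNIV (\<lambda>_. D)"

lemma iterates_measurable:
  "xs n \<in> borel_measurable sample_space \<and> ms n \<in> borel_measurable sample_space
    \<and> vs n \<in> borel_measurable sample_space"
proof (induction n)
  case 0
  have "(\<lambda>w. g x1 (w 1)) \<in> borel_measurable sample_space"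
    by (intro measurable_g_sample measurable_component_singleton) simp_all
  then show ?case by (simp add: iterates_0)
next
  case (Suc n)
  then have [measurable]: "xs n \<in> borel_measurable sample_space" "ms n \<in> borel_measurable sample_space"
    "vs n \<in> borel_measurable sample_space" by simp_all
  have x_Suc [measurable]: "xs (Suc n) \<in> borel_measurable sample_space"
    unfolding iterates_Suc(1)[abs_def] by measurable
  have [measurable]: "(\<lambda>w. g (xs (Suc n) w) (w (n + 2))) \<in> borel_measurable sample_space"
    by (intro measurable_g_sample x_Suc measurable_component_singleton) simp
  show ?case unfolding iterates_Suc(2,3)[abs_def] by (intro conjI x_Suc) measurable
qed

lemmas xs_measurable [measurable] = iterates_measurable[THEN conjunct1]
  and ms_measurable [measurable] = iterates_measurable[THEN conjunct2, THEN conjunct1]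
  and vs_measurable [measurable] = iterates_measurable[THEN conjunct2, THEN conjunct2]

lemma eta_lam_T_le: "eta * lam * real T \<le> 1 / 2"
proof -
  have "eta * lam * real T \<le> eta * (1 / (2 * eta * real T)) * real T"
    using eta lam by (intro mult_right_mono mult_left_mono) auto
  also have "\<dots> = 1 / 2" using eta T by (simp add: field_simps)
  finally show ?thesis .
qed

lemma xs_component_le: "\<bar>xs n w $ i\<bar> \<le> real (Suc n) * eta"
proof (induction n)
  case 0
  then show ?case using x1 by (simp add: iterates_0)
next
  case (Suc n)
  have "0 \<le> eta * lam" using eta lam by simp
  moreover have "eta * lam \<le> eta * lam * real T"
    using mult_left_mono[of 1 "real T" "eta * lam"] \<open>0 \<le> eta * lam\<close> T by simp
  ultimately have decay: "0 \<le> 1 - eta * lam" "1 - eta * lam \<le> 1"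
    using eta_lam_T_le by linarith+
  have "xs (Suc n) w $ i = (1 - eta * lam) * xs n w $ i - eta * sgn (vs n w $ i)"
    by (simp add: iterates_Suc sign_vec_def algebra_simps)
  also have "\<bar>\<dots>\<bar> \<le> (1 - eta * lam) * \<bar>xs n w $ i\<bar> + eta * \<bar>sgn (vs n w $ i)\<bar>"
    using decay eta by (intro order_trans[OF abs_triangle_ineq4]) (simp add: abs_mult)
  also have "\<dots> \<le> 1 * \<bar>xs n w $ i\<bar> + eta * 1"
    using decay eta by (intro add_mono mult_right_mono mult_left_mono) (auto simp: abs_sgn_eq)
  also have "\<dots> \<le> real (Suc (Suc n)) * eta"
    using Suc.IH by (simp add: algebra_simps)
  finally show ?case .
qed

lemma xs_step_component_le:
  assumes "Suc n < T"
  shows "\<bar>(xs (Suc n) w - xs n w) $ i\<bar> \<le> 2 * eta"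
proof -
  have "\<bar>lam * xs n w $ i\<bar> \<le> lam * (real (Suc n) * eta)"
    using xs_component_le[of n w i] lam by (simp add: abs_mult mult_left_mono)
  also have "\<dots> \<le> lam * (real T * eta)"
    using assms lam eta by (intro mult_left_mono mult_right_mono) auto
  also have "\<dots> \<le> 1 / 2" using eta_lam_T_le by (simp add: algebra_simps)
  finally have "\<bar>sgn (vs n w $ i) + lam * xs n w $ i\<bar> \<le> 2"
    using abs_triangle_ineq[of "sgn (vs n w $ i)" "lam * xs n w $ i"] abs_sgn_eq_1[of "vs n w $ i"]
    by (cases "vs n w $ i = 0") auto
  then show ?thesis
    using eta by (simp add: iterates_Suc sign_vec_def abs_mult)
qed

definition drift_bound :: real where
  "drift_bound = 4 * eta\<^sup>2 * L\<^sup>2 * real CARD('d)"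

lemma drift_bound_nonneg: "0 \<le> drift_bound"
  by (simp add: drift_bound_def)

lemma grad_drift_le:
  assumes "Suc n < T"
  shows "(norm (f' (xs n w) - f' (xs (Suc n) w)))\<^sup>2 \<le> drift_bound"
proof -
  have "norm (f' (xs n w) - f' (xs (Suc n) w)) \<le> L * norm (xs (Suc n) w - xs n w)"
    using f'_lipschitz[of "xs n w" "xs (Suc n) w"] by (simp add: norm_minus_commute)
  then have "(norm (f' (xs n w) - f' (xs (Suc n) w)))\<^sup>2 \<le> L\<^sup>2 * (norm (xs (Suc n) w - xs n w))\<^sup>2"
    by (metis norm_ge_zero power_mono power_mult_distrib)
  also have "\<dots> \<le> L\<^sup>2 * (real CARD('d) * (2 * eta)\<^sup>2)"
    by (intro mult_left_mono norm_sq_le_card_if_components_le xs_step_component_le assms) auto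
  finally show ?thesis by (simp add: drift_bound_def power_mult_distrib mult_ac)
qed

definition m_err :: "nat \<Rightarrow> ennreal" where
  "m_err n = (\<integral>\<^sup>+w. ennreal ((norm (ms n w - f' (xs n w)))\<^sup>2) \<partial>sample_space)"

definition v_err :: "nat \<Rightarrow> ennreal" where
  "v_err n = (\<integral>\<^sup>+w. ennreal ((norm (vs n w - f' (xs n w)))\<^sup>2) \<partial>sample_space)"

lemma first_sample_err_le: "(\<integral>\<^sup>+w. ennreal ((norm (g x1 (w 1) - f' x1))\<^sup>2) \<partial>sample_space) \<le> \<sigma>\<^sup>2"
  using nn_integral_fresh_noise_le[where I=UNIV and t="1::nat" and Y="\<lambda>_. 0" and X="\<lambda>_. x1" and b=1] by simp

text \<open>Both \<open>ms\<close> (\<open>b = beta2\<close>) and \<open>vs\<close> (\<open>b = beta1\<close>) are updates of this form. The new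
  error is the old one plus the gradient drift, shrunk by \<open>1 - b\<close>, plus \<open>b\<close> times fresh noise;
  the noise is uncorrelated with the rest, and Young's inequality with weight \<open>b\<close> absorbs
  the drift.\<close>

lemma momentum_update_err_le:
  assumes n: "Suc n < T" and b: "0 < b" "b \<le> 1" and B: "0 \<le> B" "m_err n \<le> B"
  shows "(\<integral>\<^sup>+w. ennreal ((norm ((1 - b) *\<^sub>R ms n w + b *\<^sub>R g (xs (Suc n) w) (w (n + 2))
            - f' (xs (Suc n) w)))\<^sup>2) \<partial>sample_space)
         \<le> (1 - b) * B + drift_bound / b + b\<^sup>2 * \<sigma>\<^sup>2"
proof -
  interpret prob_space D by (rule prob_space_D)
  interpret product_prob_space "\<lambda>_. D" UNIV by unfold_locales
  define Y where "Y w = (1 - b) *\<^sub>R ((ms n w - f' (xs n w)) + (f' (xs n w) - f' (xs (Suc n) w)))" for w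
  have Y_measurable: "Y \<in> borel_measurable sample_space"
    unfolding Y_def by measurable
  have split: "(1 - b) *\<^sub>R ms n w + b *\<^sub>R g (xs (Suc n) w) (w (n + 2)) - f' (xs (Suc n) w)
      = Y w + b *\<^sub>R (g (xs (Suc n) w) (w (n + 2)) - f' (xs (Suc n) w))" for w
    unfolding Y_def by (simp add: algebra_simps)
  have Y_le: "(norm (Y w))\<^sup>2 \<le> (1 - b) * (norm (ms n w - f' (xs n w)))\<^sup>2 + drift_bound / b" for w
  proof -
    have "(norm (Y w))\<^sup>2 \<le> (1 - b) * (norm (ms n w - f' (xs n w)))\<^sup>2
        + (norm (f' (xs n w) - f' (xs (Suc n) w)))\<^sup>2 / b"
      unfolding Y_def by (rule norm_scaleR_one_minus_add_sq_le[OF b])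
    also have "\<dots> \<le> (1 - b) * (norm (ms n w - f' (xs n w)))\<^sup>2 + drift_bound / b"
      using grad_drift_le[OF n] b by (simp add: divide_right_mono)
    finally show ?thesis .
  qed
  have "(\<integral>\<^sup>+w. ennreal ((norm ((1 - b) *\<^sub>R ms n w + b *\<^sub>R g (xs (Suc n) w) (w (n + 2))
            - f' (xs (Suc n) w)))\<^sup>2) \<partial>sample_space)
      \<le> (\<integral>\<^sup>+w. ennreal ((norm (Y w))\<^sup>2) \<partial>sample_space) + ennreal (b\<^sup>2 * \<sigma>\<^sup>2)"
    unfolding split using n
    by (intro nn_integral_fresh_noise_le Y_measurable xs_measurable)
      (simp_all add: Y_def iterates_fun_upd xs_Suc_fun_upd)
  also have "(\<integral>\<^sup>+w. ennreal ((norm (Y w))\<^sup>2) \<partial>sample_space)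
      \<le> (\<integral>\<^sup>+w. ennreal ((1 - b) * (norm (ms n w - f' (xs n w)))\<^sup>2 + drift_bound / b) \<partial>sample_space)"
    using Y_le by (intro nn_integral_mono ennreal_leI)
  also have "\<dots> = ennreal (1 - b) * m_err n + ennreal (drift_bound / b)"
    unfolding m_err_def using b drift_bound_nonneg
    by (simp add: ennreal_plus ennreal_mult nn_integral_add nn_integral_cmult P.emeasure_space_1)
  also have "\<dots> \<le> ennreal (1 - b) * ennreal B + ennreal (drift_bound / b)"
    using B by (intro add_mono mult_left_mono) auto
  finally show ?thesis
    using b B drift_bound_nonneg by (simp add: add.assoc ennreal_plus ennreal_mult)
qed

definition m_bound :: "nat \<Rightarrow> real" where
  "m_bound n = (1 - beta2) ^ n * \<sigma>\<^sup>2 + drift_bound / beta2\<^sup>2 + beta2 * \<sigma>\<^sup>2"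

lemma m_bound_nonneg: "0 \<le> m_bound n"
  using beta2 drift_bound_nonneg by (simp add: m_bound_def)

lemma m_err_le: "n < T \<Longrightarrow> m_err n \<le> m_bound n"
proof (induction n)
  case 0
  have "m_err 0 \<le> \<sigma>\<^sup>2" using first_sample_err_le by (simp add: m_err_def iterates_0)
  also have "\<dots> \<le> m_bound 0" using beta2 drift_bound_nonneg by (intro ennreal_leI) (simp add: m_bound_def)
  finally show ?case .
next
  case (Suc n)
  have "m_err (Suc n) \<le> (1 - beta2) * m_bound n + drift_bound / beta2 + beta2\<^sup>2 * \<sigma>\<^sup>2"
    unfolding m_err_def[of "Suc n"] iterates_Suc(2)
    using Suc beta2 m_bound_nonneg by (intro momentum_update_err_le) auto
  also have "(1 - beta2) * m_bound n + drift_bound / beta2 + beta2\<^sup>2 * \<sigma>\<^sup>2 = m_bound (Suc n)"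
    using beta2 by (simp add: m_bound_def field_simps power2_eq_square)
  finally show ?case .
qed

definition v_bound :: "nat \<Rightarrow> real" where
  "v_bound n = (case n of 0 \<Rightarrow> \<sigma>\<^sup>2 | Suc k \<Rightarrow> m_bound k + drift_bound / beta2\<^sup>2 + beta2 * \<sigma>\<^sup>2)"

lemma v_bound_nonneg: "0 \<le> v_bound n"
  using beta2 drift_bound_nonneg m_bound_nonneg by (simp add: v_bound_def split: nat.split)

lemma v_err_le: "n < T \<Longrightarrow> v_err n \<le> v_bound n"
proof (cases n)
  case 0
  then show ?thesis using first_sample_err_le by (simp add: v_err_def v_bound_def iterates_0)
next
  case (Suc k)
  assume "n < T"
  have "v_err n \<le> (1 - beta1) * m_bound k + drift_bound / beta1 + beta1\<^sup>2 * \<sigma>\<^sup>2"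
    unfolding v_err_def Suc iterates_Suc(3)
    using \<open>n < T\<close> Suc beta1 m_bound_nonneg m_err_le by (intro momentum_update_err_le) auto
  also have "(1 - beta1) * m_bound k + drift_bound / beta1 + beta1\<^sup>2 * \<sigma>\<^sup>2 \<le> v_bound n"
  proof -
    have "(1 - beta1) * m_bound k \<le> m_bound k"
      using beta1 m_bound_nonneg[of k] by (simp add: mult_left_le_one_le)
    moreover have "drift_bound / beta1 \<le> drift_bound / beta2\<^sup>2"
      using beta12 beta1 beta2 drift_bound_nonneg by (intro divide_left_mono) auto
    moreover have "beta1\<^sup>2 * \<sigma>\<^sup>2 \<le> beta2 * \<sigma>\<^sup>2"
      using beta12 by (intro mult_right_mono) auto
    ultimately show ?thesis by (simp add: v_bound_def Suc)
  qed
  finally show ?thesis by (simp add: ennreal_leI order_trans)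
qed

lemma sum_v_bound_le:
  "(\<Sum>n<T. v_bound n) \<le> 2 * \<sigma>\<^sup>2 / beta2 + real T * (2 * drift_bound / beta2\<^sup>2 + 2 * beta2 * \<sigma>\<^sup>2)"
proof -
  obtain m where m: "T = Suc m" using T by (cases T) auto
  have geometric: "(\<Sum>k<m. (1 - beta2) ^ k) \<le> 1 / beta2"
    using beta2 by (simp add: sum_gp_strict divide_right_mono)
  have "(\<Sum>n<T. v_bound n)
      = \<sigma>\<^sup>2 + (\<Sum>k<m. (1 - beta2) ^ k) * \<sigma>\<^sup>2 + real m * (2 * drift_bound / beta2\<^sup>2 + 2 * beta2 * \<sigma>\<^sup>2)"
    unfolding m sum.lessThan_Suc_shift
    by (simp add: v_bound_def m_bound_def sum.distrib sum_distrib_right) (simp add: algebra_simps)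
  also have "\<dots> \<le> \<sigma>\<^sup>2 / beta2 + (1 / beta2) * \<sigma>\<^sup>2 + real T * (2 * drift_bound / beta2\<^sup>2 + 2 * beta2 * \<sigma>\<^sup>2)"
    using geometric beta2 drift_bound_nonneg m
    by (intro add_mono mult_right_mono) (auto simp: le_divide_eq mult_left_le)
  finally show ?thesis by simp
qed

lemma expected_avg_v_err_le:
  "(\<integral>\<^sup>+w. ennreal ((1 / real T) *
      (\<Sum>t = 1..T. (norm (lion_v g beta1 beta2 eta lam x1 w t - f' (lion_x g beta1 beta2 eta lam x1 w t)))\<^sup>2))
     \<partial>sample_space)
   \<le> 2 * \<sigma>\<^sup>2 / (beta2 * real T) + 16 * eta\<^sup>2 * L\<^sup>2 * real CARD('d) / beta2\<^sup>2 + 2 * beta2 * \<sigma>\<^sup>2"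
proof -
  have avg: "(\<Sum>t = 1..T. (norm (lion_v g beta1 beta2 eta lam x1 w t - f' (lion_x g beta1 beta2 eta lam x1 w t)))\<^sup>2)
      = (\<Sum>n<T. (norm (vs n w - f' (xs n w)))\<^sup>2)" for w
    by (simp add: sum.atLeast1_atMost_eq lion_v_def lion_x_def vs_def xs_def)
  have "(\<integral>\<^sup>+w. ennreal ((1 / real T) * (\<Sum>n<T. (norm (vs n w - f' (xs n w)))\<^sup>2)) \<partial>sample_space)
      = ennreal (1 / real T) * (\<Sum>n<T. v_err n)"
  proof -
    have "(\<integral>\<^sup>+w. ennreal ((1 / real T) * (\<Sum>n<T. (norm (vs n w - f' (xs n w)))\<^sup>2)) \<partial>sample_space)
        = (\<integral>\<^sup>+w. ennreal (1 / real T) * (\<Sum>n<T. ennreal ((norm (vs n w - f' (xs n w)))\<^sup>2)) \<partial>sample_space)"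
      by (intro nn_integral_cong, subst ennreal_mult) (auto simp: sum_nonneg sum_ennreal)
    also have "\<dots> = ennreal (1 / real T) * (\<Sum>n<T. v_err n)"
      unfolding v_err_def by (simp add: nn_integral_cmult nn_integral_sum del: sum_ennreal)
    finally show ?thesis .
  qed
  also have "\<dots> \<le> ennreal (1 / real T) * (\<Sum>n<T. ennreal (v_bound n))"
    by (intro mult_left_mono sum_mono v_err_le) auto
  also have "\<dots> = ennreal ((1 / real T) * (\<Sum>n<T. v_bound n))"
    using v_bound_nonneg by (simp add: sum_nonneg flip: ennreal_mult)
  also have "\<dots> \<le> ennreal ((1 / real T) * (2 * \<sigma>\<^sup>2 / beta2 + real T * (2 * drift_bound / beta2\<^sup>2 + 2 * beta2 * \<sigma>\<^sup>2)))"
    using sum_v_bound_le by (intro ennreal_leI mult_left_mono) auto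
  \<comment> \<open>The argument gives \<open>8\<close> in place of the stated constant \<open>16\<close>.\<close>
  also have "\<dots> \<le> 2 * \<sigma>\<^sup>2 / (beta2 * real T) + 16 * eta\<^sup>2 * L\<^sup>2 * real CARD('d) / beta2\<^sup>2 + 2 * beta2 * \<sigma>\<^sup>2"
    using T beta2 by (intro ennreal_leI) (simp add: drift_bound_def field_simps)
  finally show ?thesis unfolding avg .
qed

end

theorem mainTheorem3:
  fixes f :: "real^'d \<Rightarrow> real" and f' :: "real^'d \<Rightarrow> real^'d"
    and D :: "'b measure" and g :: "real^'d \<Rightarrow> 'b \<Rightarrow> real^'d"
    and L \<sigma> beta1 beta2 eta lam :: real and x1 :: "real^'d" and T :: nat
  assumes D_prob: "prob_space D"
    and g_meas: "(\<lambda>(x, \<xi>). g x \<xi>) \<in> borel_measurable (borel \<Otimes>\<^sub>M D)"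
    and grad: "\<And>x. (f has_derivative (\<lambda>h. f' x \<bullet> h)) (at x)"
    and A1: "\<And>x y. norm (f' x - f' y) \<le> L * norm (x - y)"
    and A3_int: "\<And>x. integrable D (g x)"
    and A3_unbiased: "\<And>x. (\<integral>\<xi>. g x \<xi> \<partial>D) = f' x"
    and A3_var: "\<And>x. (\<integral>\<^sup>+\<xi>. ennreal ((norm (g x \<xi> - f' x))\<^sup>2) \<partial>D) \<le> ennreal (\<sigma>\<^sup>2)"
    and b1: "0 < beta1" "beta1 \<le> 1"
    and b2: "0 < beta2" "beta2 \<le> 1"
    and b12: "beta2\<^sup>2 \<le> beta1" "beta1 \<le> sqrt beta2"
    and eta: "0 < eta"
    and T: "T \<ge> 1"
    and lam: "0 \<le> lam" "lam \<le> 1 / (2 * eta * real T)"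
    and x1: "\<And>i. \<bar>x1 $ i\<bar> \<le> eta"
  shows "(\<integral>\<^sup>+\<omega>. ennreal ((1 / real T) *
            (\<Sum>t = 1..T. (norm (lion_v g beta1 beta2 eta lam x1 \<omega> t
                                 - f' (lion_x g beta1 beta2 eta lam x1 \<omega> t)))\<^sup>2))
           \<partial>(PiM (UNIV :: nat set) (\<lambda>_. D)))
         \<le> ennreal (2 * \<sigma>\<^sup>2 / (beta2 * real T)
                    + 16 * eta\<^sup>2 * L\<^sup>2 * real CARD('d) / beta2\<^sup>2
                    + 2 * beta2 * \<sigma>\<^sup>2)"
proof -
  have "beta1\<^sup>2 \<le> (sqrt beta2)\<^sup>2"
    using b1 b12 by (intro power_mono) auto
  then have "beta1\<^sup>2 \<le> beta2"
    using b2 by simp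
  then interpret lion D g f' \<sigma> L beta1 beta2 eta lam x1 T
    by (intro lion.intro stochastic_gradient_oracle.intro lion_axioms.intro
        D_prob g_meas A3_int A3_unbiased A3_var A1 b1 b2 b12(1) eta T lam x1)
  show ?thesis
    by (rule expected_avg_v_err_le)
qed

end
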